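(* Let $A,F_1,\dots,F_k,B$ be a sequence of faces of $\mathcal{C}$, all of the same dimension, such that each face in the sequence opposes the next one. Then the two-sided ideal $Re_AR$ of $R$ generated by $e_A$ contains $e_B$.
   Context: Let $\mathcal{H}$ be a finite arrangement of linear hyperplanes in $\mathbb{R}^n$, each $H$ cut out by a fixed real linear form $f_H$, with sign vectors $\sigma(x)\in\{+,-,0\}^{\mathcal{H}}$. Faces are classes of points with equal sign vector; $\mathcal{C}$ is the set of faces, ordered by $C'\le C$ iff $C'\subseteq\overline{C}$. Two faces $A,B$ of equal dimension $d\ge1$ oppose each other if they have the same linear span and there is a face $C$ of dimension $d-1$, $C\le A$, $C\le B$, with $\sigma(A)_H=-\sigma(B)_H$ for every $H$ with $\sigma(C)_H=0$. $A,B,C$ are collinear if a line segment meets $A,B,C$ in that order. $R$ is the $\mathbb{C}$-algebra generated by $e_C$ ($C\in\mathcal{C}$) with relations $e_C^2=e_C$; $e_Ae_C=e_Ae_Be_C$ for collinear $A,B,C$; $e_Ae_B=e_B=e_Be_A$ for $A\le B$; localised by inverting all $e_Ae_Be_A+(1-e_A)$ with $A,B$ opposing. *)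

theory Defs
  imports "HOL-Analysis.Analysis"
begin

definition hyperplane_arrangement :: "'h set \<Rightarrow> ('h \<Rightarrow> 'v::euclidean_space \<Rightarrow> real) \<Rightarrow> bool" where
  "hyperplane_arrangement HS f \<longleftrightarrow> finite HS \<and> (\<forall>h\<in>HS. linear (f h) \<and> f h \<noteq> (\<lambda>_. 0))"

definition sgnvec :: "'h set \<Rightarrow> ('h \<Rightarrow> 'v::euclidean_space \<Rightarrow> real) \<Rightarrow> 'v \<Rightarrow> 'h \<Rightarrow> real" where
  "sgnvec HS f x = (\<lambda>h. if h \<in> HS then sgn (f h x) else 0)"

definition face_of_pt :: "'h set \<Rightarrow> ('h \<Rightarrow> 'v::euclidean_space \<Rightarrow> real) \<Rightarrow> 'v \<Rightarrow> 'v set" where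
  "face_of_pt HS f x = {y. sgnvec HS f y = sgnvec HS f x}"

definition arr_faces :: "'h set \<Rightarrow> ('h \<Rightarrow> 'v::euclidean_space \<Rightarrow> real) \<Rightarrow> 'v set set" where
  "arr_faces HS f = range (face_of_pt HS f)"

definition face_sgn :: "'h set \<Rightarrow> ('h \<Rightarrow> 'v::euclidean_space \<Rightarrow> real) \<Rightarrow> 'v set \<Rightarrow> 'h \<Rightarrow> real" where
  "face_sgn HS f C = sgnvec HS f (SOME x. x \<in> C)"

definition face_le :: "'v::euclidean_space set \<Rightarrow> 'v set \<Rightarrow> bool" where
  "face_le C' C \<longleftrightarrow> C' \<subseteq> closure C"

definition opposing :: "'h set \<Rightarrow> ('h \<Rightarrow> 'v::euclidean_space \<Rightarrow> real) \<Rightarrow> 'v set \<Rightarrow> 'v set \<Rightarrow> bool" where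
  "opposing HS f A B \<longleftrightarrow>
     A \<in> arr_faces HS f \<and> B \<in> arr_faces HS f \<and> dim A = dim B \<and> 1 \<le> dim A \<and> span A = span B \<and>
     (\<exists>C\<in>arr_faces HS f. dim C = dim A - 1 \<and> face_le C A \<and> face_le C B \<and>
        (\<forall>h\<in>HS. face_sgn HS f C h = 0 \<longrightarrow> face_sgn HS f A h = - face_sgn HS f B h))"

definition collinear_faces :: "'v::euclidean_space set \<Rightarrow> 'v set \<Rightarrow> 'v set \<Rightarrow> bool" where
  "collinear_faces A B C \<longleftrightarrow>
     (\<exists>a\<in>A. \<exists>b\<in>B. \<exists>c\<in>C. b \<in> closed_segment a c)"

definition invertible_elem :: "'a::ring_1 \<Rightarrow> bool" where
  "invertible_elem x \<longleftrightarrow> (\<exists>y. x * y = 1 \<and> y * x = 1)"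

definition two_sided_ideal :: "'a::ring_1 \<Rightarrow> 'a set" where
  "two_sided_ideal x = {z. \<exists>(m::nat) r s. z = (\<Sum>i<m. r i * x * s i)}"

definition complex_algebra_str :: "(complex \<Rightarrow> 'a::ring_1) \<Rightarrow> bool" where
  "complex_algebra_str emb \<longleftrightarrow> emb 1 = 1 \<and> (\<forall>x y. emb (x + y) = emb x + emb y) \<and>
     (\<forall>x y. emb (x * y) = emb x * emb y) \<and> (\<forall>z a. emb z * a = a * emb z)"

text \<open>e : faces \<rightarrow> S is a representation of R in the complex algebra S, i.e. satisfies the
  defining relations of R and sends the elements inverted in R to units.  By the universal
  property of R (generators + relations, then universal localisation) such representations
  are exactly the algebra homomorphisms R \<rightarrow> S, composed with C \<mapsto> e_C.\<close>
definition R_rep :: "'h set \<Rightarrow> ('h \<Rightarrow> 'v::euclidean_space \<Rightarrow> real) \<Rightarrow> (complex \<Rightarrow> 'a::ring_1) \<Rightarrow> ('v set \<Rightarrow> 'a) \<Rightarrow> bool" where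
  "R_rep HS f emb e \<longleftrightarrow> complex_algebra_str emb \<and>
     (\<forall>C\<in>arr_faces HS f. e C * e C = e C) \<and>
     (\<forall>A\<in>arr_faces HS f. \<forall>B\<in>arr_faces HS f. \<forall>C\<in>arr_faces HS f.
        collinear_faces A B C \<longrightarrow> e A * e C = e A * e B * e C) \<and>
     (\<forall>A\<in>arr_faces HS f. \<forall>B\<in>arr_faces HS f.
        face_le A B \<longrightarrow> e A * e B = e B \<and> e B * e A = e B) \<and>
     (\<forall>A B. opposing HS f A B \<longrightarrow> invertible_elem (e A * e B * e A + (1 - e A)))"

end

theory Submission
  imports Defs
begin

(* If A opposes B, then u = e_A e_B e_A + (1 - e_A) is invertible, and idempotence of e_A
   gives e_A u = e_A e_B e_A; hence e_A = e_A e_B (e_A u^-1) lies in the ideal generated by e_B.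
   Opposition is symmetric, so along the chain A, F_1, ..., F_k, B each e_F lies in the ideal
   generated by its predecessor, and membership in generated ideals is transitive. *)

lemma two_sided_ideal_mult_mem: "(r::'a::ring_1) * x * s \<in> two_sided_ideal x"
  unfolding two_sided_ideal_def
  by (intro CollectI exI[of _ 1] exI[of _ "\<lambda>_. r"] exI[of _ "\<lambda>_. s"]) simp

lemma two_sided_ideal_zero: "(0::'a::ring_1) \<in> two_sided_ideal x"
  unfolding two_sided_ideal_def by (intro CollectI exI[of _ 0]) simp

lemma two_sided_ideal_add:
  fixes x :: "'a::ring_1"
  assumes z: "z \<in> two_sided_ideal x" and w: "w \<in> two_sided_ideal x"
  shows "z + w \<in> two_sided_ideal x"
proof -
  from w obtain n r s where w_eq: "w = (\<Sum>i<(n::nat). r i * x * s i)"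
    unfolding two_sided_ideal_def by blast
  have "z + (\<Sum>i<k. r i * x * s i) \<in> two_sided_ideal x" for k
  proof (induction k)
    case 0
    then show ?case using z by simp
  next
    case (Suc k)
    then obtain m p q where IH: "z + (\<Sum>i<k. r i * x * s i) = (\<Sum>i<(m::nat). p i * x * q i)"
      unfolding two_sided_ideal_def by blast
    have "z + (\<Sum>i<Suc k. r i * x * s i) = (\<Sum>i<Suc m. (p(m := r k)) i * x * (q(m := s k)) i)"
      by (simp add: add.assoc[symmetric] IH)
    then show ?case unfolding two_sided_ideal_def by blast
  qed
  then show ?thesis using w_eq by simp
qed

lemma two_sided_ideal_sum:
  fixes x :: "'a::ring_1"
  assumes "finite S" and "\<And>i. i \<in> S \<Longrightarrow> g i \<in> two_sided_ideal x"
  shows "sum g S \<in> two_sided_ideal x"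
  using assms by (induction S rule: finite_induct) (simp_all add: two_sided_ideal_zero two_sided_ideal_add)

lemma two_sided_ideal_mult:
  fixes x :: "'a::ring_1"
  assumes "y \<in> two_sided_ideal x"
  shows "r * y * s \<in> two_sided_ideal x"
proof -
  from assms obtain m p q where y: "y = (\<Sum>i<(m::nat). p i * x * q i)"
    unfolding two_sided_ideal_def by blast
  have "r * y * s = (\<Sum>i<m. (r * p i) * x * (q i * s))"
    unfolding y by (simp add: sum_distrib_left sum_distrib_right mult.assoc)
  then show ?thesis
    by (simp add: two_sided_ideal_sum two_sided_ideal_mult_mem)
qed

lemma two_sided_ideal_trans:
  fixes x :: "'a::ring_1"
  assumes "z \<in> two_sided_ideal y" and "y \<in> two_sided_ideal x"
  shows "z \<in> two_sided_ideal x"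
proof -
  from assms(1) obtain m p q where "z = (\<Sum>i<(m::nat). p i * y * q i)"
    unfolding two_sided_ideal_def by blast
  then show ?thesis
    by (simp add: two_sided_ideal_sum two_sided_ideal_mult assms(2))
qed

lemma idempotent_mem_two_sided_ideal:
  fixes p q :: "'a::ring_1"
  assumes idem: "p * p = p" and inv: "invertible_elem (p * q * p + (1 - p))"
  shows "p \<in> two_sided_ideal q"
proof -
  define u where "u = p * q * p + (1 - p)"
  from inv obtain w where w: "u * w = 1"
    unfolding invertible_elem_def u_def by blast
  have pu: "p * u = p * q * p"
    unfolding u_def by (simp add: algebra_simps idem flip: mult.assoc)
  have "p = p * u * w" using w by (simp add: mult.assoc)
  also have "\<dots> = p * q * (p * w)" by (simp add: pu mult.assoc)
  finally show ?thesis by (metis two_sided_ideal_mult_mem)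
qed

lemma opposing_sym: "opposing HS f A B \<Longrightarrow> opposing HS f B A"
  unfolding opposing_def by (metis minus_equation_iff)

lemma R_rep_opposing_mem_two_sided_ideal:
  assumes rep: "R_rep HS f emb e" and opp: "opposing HS f A B"
  shows "e A \<in> two_sided_ideal (e B)"
proof (rule idempotent_mem_two_sided_ideal)
  show "e A * e A = e A"
    using rep opp unfolding R_rep_def opposing_def by blast
  show "invertible_elem (e A * e B * e A + (1 - e A))"
    using rep opp unfolding R_rep_def by blast
qed

lemma R_rep_opposing_chain_mem_two_sided_ideal:
  assumes rep: "R_rep HS f emb e"
    and chain: "\<forall>i < length Fs + 1. opposing HS f ((A # Fs @ [B]) ! i) ((A # Fs @ [B]) ! Suc i)"
  shows "e B \<in> two_sided_ideal (e A)"
  using chain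
proof (induction Fs arbitrary: A)
  case Nil
  then have "opposing HS f B A" by (auto intro: opposing_sym)
  then show ?case using R_rep_opposing_mem_two_sided_ideal[OF rep] by blast
next
  case (Cons F Fs)
  from Cons.prems have "e B \<in> two_sided_ideal (e F)" by (intro Cons.IH) auto
  moreover from Cons.prems[rule_format, of 0] have "opposing HS f F A" by (simp add: opposing_sym)
  then have "e F \<in> two_sided_ideal (e A)" using R_rep_opposing_mem_two_sided_ideal[OF rep] by blast
  ultimately show ?case by (rule two_sided_ideal_trans)
qed

theorem lemma4p1:
  fixes HS :: "'h set" and f :: "'h \<Rightarrow> 'v::euclidean_space \<Rightarrow> real"
    and emb :: "complex \<Rightarrow> 'a::ring_1" and e :: "'v set \<Rightarrow> 'a"
    and A B :: "'v set" and Fs :: "'v set list"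
  assumes "hyperplane_arrangement HS f"
    and "R_rep HS f emb e"
    and "A \<in> arr_faces HS f" and "B \<in> arr_faces HS f" and "set Fs \<subseteq> arr_faces HS f"
    and "\<forall>X\<in>set (A # Fs @ [B]). dim X = dim A"
    and "\<forall>i < length Fs + 1. opposing HS f ((A # Fs @ [B]) ! i) ((A # Fs @ [B]) ! Suc i)"
  shows "e B \<in> two_sided_ideal (e A)"
  using R_rep_opposing_chain_mem_two_sided_ideal[OF assms(2) assms(7)] .

end
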